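(* Consider long-range first-passage percolation on $\mathbb{Z}^d$ (setting in the context) with $r(k)=k^{-\alpha}$, $k\ge1$, where $\alpha>2d+1$. Let $\theta\in(0,1)$ and $c_1,c_2>0$. Then there is a constant $C>0$ such that for all $n\ge1$, $$\mathbb{P}\big(W_{\langle zw\rangle}\ge c_1n\text{ for all }z\in B(0,c_2n)\text{ and }w\notin B(z,n^\theta)\big)\ge1-Cn^{d+1-\theta(\alpha-d)}.$$
   Context: Let $d\ge1$, $\|x\|_1=\sum_i|x_i|$, $\|x\|_\infty=\max_i|x_i|$, and $B(u,s)=\{x\in\mathbb{Z}^d:\|x-u\|_\infty\le s\}$. Let $\mathcal{E}$ be the set of unordered pairs $e=\langle xy\rangle$ of distinct points of $\mathbb{Z}^d$, with length $\|e\|_1=\|x-y\|_1$. Let $(\omega_e)$ be i.i.d. mean-one exponential random variables and $W_e=\omega_e/r(\|e\|_1)$. *)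

theory Defs
  imports "HOL-Probability.Probability"
begin

text \<open>Points of Z^d are int^'d with d = CARD('d).\<close>

definition linf_norm :: "int ^ 'd \<Rightarrow> int" where
  "linf_norm x = Max (range (\<lambda>i. \<bar>x $ i\<bar>))"

definition l1_norm :: "int ^ 'd \<Rightarrow> int" where
  "l1_norm x = (\<Sum>i\<in>UNIV. \<bar>x $ i\<bar>)"

definition Box :: "int ^ 'd \<Rightarrow> real \<Rightarrow> (int ^ 'd) set" where
  "Box u s = {x. real_of_int (linf_norm (x - u)) \<le> s}"

definition LR_edges :: "(int ^ 'd) set set" where
  "LR_edges = {{x, y} | x y. x \<noteq> y}"

definition r_pow :: "real \<Rightarrow> real \<Rightarrow> real" where
  "r_pow \<alpha> k = k powr (- \<alpha>)"

definition LR_W :: "real \<Rightarrow> ((int ^ 'd) set \<Rightarrow> 'w \<Rightarrow> real) \<Rightarrow> int ^ 'd \<Rightarrow> int ^ 'd \<Rightarrow> 'w \<Rightarrow> real" where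
  "LR_W \<alpha> \<omega> z w x = \<omega> {z, w} x / r_pow \<alpha> (real_of_int (l1_norm (z - w)))"

end

theory Submission
  imports Defs
begin

(*
  A union bound suffices. For a single edge,
  P(W_zw < t) = P(omega_zw < t |z - w|_1^(-alpha)) <= t |z - w|_1^(-alpha). The l-infinity sphere of
  radius m has O(m^(d-1)) points, so for t = c_1 n the edges from a fixed z that leave B(z, n^theta)
  contribute O(n sum_{m > n^theta} m^(d-1-alpha)) = O(n^(1 - theta (alpha - d))), and there are O(n^d)
  centres z in B(0, c_2 n).
*)

lemma powr_neg_diff_ge:
  fixes s x :: real
  assumes s: "s > 0" and x: "x > 0"
  shows "s * (x + 1) powr (- (s + 1)) \<le> x powr (- s) - (x + 1) powr (- s)"
proof -
  have "\<exists>z. x < z \<and> z < x + 1 \<and>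
      (x + 1) powr (- s) - x powr (- s) = ((x + 1) - x) * (- s * z powr (- s - 1))"
    by (rule MVT2) (use x in \<open>auto intro!: has_real_derivative_powr[of _ "- s", simplified]\<close>)
  then obtain z where z: "x < z" "z < x + 1"
    and mvt: "(x + 1) powr (- s) - x powr (- s) = ((x + 1) - x) * (- s * z powr (- s - 1))"
    by blast
  have exponent: "- s - 1 = - (s + 1)"
    by simp
  have "(x + 1) powr (- (s + 1)) \<le> z powr (- (s + 1))"
    using z x s by (intro powr_mono2') auto
  then have "s * (x + 1) powr (- (s + 1)) \<le> s * z powr (- (s + 1))"
    using s by (simp add: mult_left_mono)
  with mvt show ?thesis
    unfolding exponent by simp
qed

text \<open>By \<open>powr_neg_diff_ge\<close> each term is at most \<open>((m - 1) powr (- s) - m powr (- s)) / s\<close>,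
  and these differences telescope.\<close>

lemma powr_tail_summable_le:
  fixes s :: real and K :: nat
  assumes s: "s > 0" and K: "K \<ge> 2"
  shows "summable (\<lambda>m::nat. if K \<le> m then real m powr (- (s + 1)) else 0)"
    and "(\<Sum>m. if K \<le> m then real m powr (- (s + 1)) else 0) \<le> (real K - 1) powr (- s) / s"
proof -
  define b where "b = (\<lambda>m::nat. if K \<le> m then real m powr (- (s + 1)) else 0)"
  define u where "u = (\<lambda>m::nat. max (real K - 1) (real m) powr (- s))"
  have "(\<lambda>m. real m powr (- s)) \<longlonglongrightarrow> 0"
    using s by (intro tendsto_neg_powr) (auto simp: filterlim_real_sequentially)
  moreover have "eventually (\<lambda>m. real m powr (- s) = u m) sequentially"
    unfolding u_def eventually_sequentially by (auto intro!: exI[of _ K] simp: max_def)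
  ultimately have "u \<longlonglongrightarrow> 0"
    by (simp add: tendsto_cong)
  then have tel: "(\<lambda>m. (u m - u (Suc m)) / s) sums ((u 0 - 0) / s)"
    by (intro sums_divide telescope_sums')
  have b_le: "b (Suc m) \<le> (u m - u (Suc m)) / s" for m
  proof (cases "K \<le> Suc m")
    case True
    then have "u m = real m powr (- s)" "u (Suc m) = (real m + 1) powr (- s)"
      using K by (auto simp: u_def max_def add.commute)
    moreover have "s * (real m + 1) powr (- (s + 1)) \<le> real m powr (- s) - (real m + 1) powr (- s)"
      using s True K by (intro powr_neg_diff_ge) auto
    moreover have "b (Suc m) = (real m + 1) powr (- (s + 1))"
      using True by (simp add: b_def add.commute)
    ultimately show ?thesis
      using s by (simp add: pos_le_divide_eq mult.commute)
  next
    case False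
    have "u (Suc m) \<le> u m"
      unfolding u_def using s K by (intro powr_mono2') auto
    with False s show ?thesis
      by (simp add: b_def)
  qed
  have "summable (\<lambda>m. b (Suc m))"
    using b_le by (intro summable_comparison_test[OF _ sums_summable[OF tel]]) (auto simp: b_def)
  moreover have "b 0 = 0"
    using K by (simp add: b_def)
  ultimately have "b sums (\<Sum>m. b (Suc m))"
    using sums_Suc_iff[of b] summable_sums[of "\<lambda>m. b (Suc m)"] by simp
  moreover have "(\<Sum>m. b (Suc m)) \<le> (u 0 - 0) / s"
    using suminf_le[OF b_le \<open>summable (\<lambda>m. b (Suc m))\<close> sums_summable[OF tel]] sums_unique[OF tel]
    by simp
  moreover have "u 0 = (real K - 1) powr (- s)"
    using K by (simp add: u_def)
  ultimately show "summable b" "suminf b \<le> (real K - 1) powr (- s) / s"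
    by (simp_all add: sums_iff)
qed

lemma powr_tail_summable_le_real:
  fixes s R :: real
  assumes s: "s > 0" and R: "R \<ge> 1"
  shows "summable (\<lambda>m::nat. if R < real m then real m powr (- (s + 1)) else 0)"
    and "(\<Sum>m. if R < real m then real m powr (- (s + 1)) else 0) \<le> 2 powr s * R powr (- s) / s"
proof -
  define K where "K = nat \<lfloor>R\<rfloor> + 1"
  have floor_R: "1 \<le> \<lfloor>R\<rfloor>"
    using R by (simp add: le_floor_iff)
  have K: "K \<ge> 2"
    using floor_R by (simp add: K_def le_nat_iff)
  have threshold: "R < real m \<longleftrightarrow> K \<le> m" for m :: nat
    unfolding K_def using R by linarith
  have "real K - 1 = real_of_int \<lfloor>R\<rfloor>"
    using floor_R by (simp add: K_def)
  then have "R / 2 \<le> real K - 1"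
    using floor_R real_of_int_floor_add_one_gt[of R] by linarith
  then have "(real K - 1) powr (- s) \<le> (R / 2) powr (- s)"
    using R s by (intro powr_mono2') auto
  also have "\<dots> = 2 powr s * R powr (- s)"
    using R by (simp add: powr_divide powr_minus_divide)
  finally have "(real K - 1) powr (- s) / s \<le> 2 powr s * R powr (- s) / s"
    using s by (simp add: divide_right_mono)
  then show "summable (\<lambda>m::nat. if R < real m then real m powr (- (s + 1)) else 0)"
    and "(\<Sum>m. if R < real m then real m powr (- (s + 1)) else 0) \<le> 2 powr s * R powr (- s) / s"
    using powr_tail_summable_le[OF s K] unfolding threshold by auto
qed

lemma linf_norm_le_iff: "linf_norm (v :: int ^ 'd) \<le> k \<longleftrightarrow> (\<forall>i. \<bar>v $ i\<bar> \<le> k)"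
  unfolding linf_norm_def by (subst Max_le_iff) auto

lemma abs_le_linf_norm: "\<bar>(v :: int ^ 'd) $ i\<bar> \<le> linf_norm v"
  unfolding linf_norm_def by (rule Max_ge) auto

lemma linf_norm_nonneg: "0 \<le> linf_norm (v :: int ^ 'd)"
  using abs_le_linf_norm[of v] abs_ge_zero order_trans by blast

lemma linf_norm_zero [simp]: "linf_norm (0 :: int ^ 'd) = 0"
  by (simp add: linf_norm_def)

lemma linf_norm_commute: "linf_norm ((x :: int ^ 'd) - y) = linf_norm (y - x)"
  unfolding linf_norm_def by (simp add: abs_minus_commute)

lemma linf_norm_le_l1_norm: "linf_norm (v :: int ^ 'd) \<le> l1_norm v"
proof -
  have "linf_norm v \<in> range (\<lambda>i. \<bar>v $ i\<bar>)"
    unfolding linf_norm_def by (rule Max_in) auto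
  then obtain i where "linf_norm v = \<bar>v $ i\<bar>"
    by auto
  also have "\<dots> \<le> l1_norm v"
    unfolding l1_norm_def by (rule member_le_sum) auto
  finally show ?thesis .
qed

lemma linf_ball_eq_image_PiE:
  "{v :: int ^ 'd. linf_norm v \<le> k} = vec_lambda ` (PiE UNIV (\<lambda>_. {- k..k}))"
proof (intro set_eqI iffI)
  fix v :: "int ^ 'd"
  assume "v \<in> {v. linf_norm v \<le> k}"
  then have "vec_nth v \<in> PiE UNIV (\<lambda>_. {- k..k})"
    by (auto simp: linf_norm_le_iff abs_le_iff minus_le_iff)
  then show "v \<in> vec_lambda ` (PiE UNIV (\<lambda>_. {- k..k}))"
    by (metis image_eqI vec_nth_inverse)
next
  fix v :: "int ^ 'd"
  assume "v \<in> vec_lambda ` (PiE UNIV (\<lambda>_. {- k..k}))"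
  then show "v \<in> {v. linf_norm v \<le> k}"
    by (fastforce simp: linf_norm_le_iff abs_le_iff minus_le_iff PiE_iff)
qed

lemma finite_linf_ball: "finite {v :: int ^ 'd. linf_norm v \<le> k}"
  unfolding linf_ball_eq_image_PiE by (simp add: finite_PiE)

lemma card_linf_ball:
  assumes "k \<ge> 0"
  shows "card {v :: int ^ 'd. linf_norm v \<le> k} = nat (2 * k + 1) ^ CARD('d)"
proof -
  have "inj_on (vec_lambda :: ('d \<Rightarrow> int) \<Rightarrow> int ^ 'd) A" for A
    by (rule inj_onI) (simp add: vec_lambda_inject)
  then have "card {v :: int ^ 'd. linf_norm v \<le> k} = card (PiE (UNIV :: 'd set) (\<lambda>_. {- k..k}))"
    unfolding linf_ball_eq_image_PiE by (rule card_image)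
  also have "\<dots> = nat (2 * k + 1) ^ CARD('d)"
    by (simp add: card_PiE)
  finally show ?thesis .
qed

lemma power_diff_le:
  fixes x y :: real
  assumes "0 \<le> y" "y \<le> x"
  shows "x ^ Suc k - y ^ Suc k \<le> (x - y) * (Suc k * x ^ k)"
proof -
  have "(\<Sum>p<Suc k. x ^ p * y ^ (k - p)) \<le> (\<Sum>p<Suc k. x ^ k)"
  proof (rule sum_mono)
    fix p
    assume p: "p \<in> {..<Suc k}"
    then have "x ^ p * y ^ (k - p) \<le> x ^ p * x ^ (k - p)"
      using assms by (intro mult_left_mono power_mono) auto
    also have "\<dots> = x ^ k"
      using p by (simp add: power_add[symmetric])
    finally show "x ^ p * y ^ (k - p) \<le> x ^ k" .
  qed
  then have "(x - y) * (\<Sum>p<Suc k. x ^ p * y ^ (k - p)) \<le> (x - y) * (Suc k * x ^ k)"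
    using assms by (intro mult_left_mono) auto
  then show ?thesis
    by (subst diff_power_eq_sum)
qed

definition linf_sphere :: "int ^ 'd \<Rightarrow> nat \<Rightarrow> (int ^ 'd) set" where
  "linf_sphere z m = {w. linf_norm (w - z) = int m}"

lemma linf_sphere_eq_translate: "linf_sphere z m = (\<lambda>v. v + z) ` linf_sphere 0 m"
  unfolding linf_sphere_def by (auto intro: image_eqI[where x = "_ - z"])

lemma finite_linf_sphere: "finite (linf_sphere z m)"
proof -
  have "linf_sphere 0 m \<subseteq> {v. linf_norm v \<le> int m}"
    by (auto simp: linf_sphere_def)
  then show ?thesis
    unfolding linf_sphere_eq_translate[of z] using finite_linf_ball finite_subset by blast
qed

lemma center_notin_linf_sphere: "1 \<le> m \<Longrightarrow> z \<notin> linf_sphere z m"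
  by (simp add: linf_sphere_def)

lemma card_linf_sphere_le:
  assumes m: "m \<ge> 1"
  shows "real (card (linf_sphere (z :: int ^ 'd) m))
    \<le> 2 * real CARD('d) * 3 ^ (CARD('d) - 1) * real m ^ (CARD('d) - 1)"
proof -
  define d where "d = CARD('d)"
  have d: "d = Suc (d - 1)"
    by (simp add: d_def)
  have "card (linf_sphere z m) = card (linf_sphere (0 :: int ^ 'd) m)"
    unfolding linf_sphere_eq_translate[of z] by (rule card_image) (simp add: inj_on_def)
  also have "linf_sphere (0 :: int ^ 'd) m = {v. linf_norm v \<le> int m} - {v. linf_norm v \<le> int m - 1}"
    by (auto simp: linf_sphere_def)
  also have "card \<dots> = card {v :: int ^ 'd. linf_norm v \<le> int m} - card {v :: int ^ 'd. linf_norm v \<le> int m - 1}"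
    by (rule card_Diff_subset[OF finite_linf_ball]) auto
  also have "\<dots> = nat (2 * int m + 1) ^ d - nat (2 * (int m - 1) + 1) ^ d"
    using m card_linf_ball[of "int m", where 'd = 'd] card_linf_ball[of "int m - 1", where 'd = 'd]
    by (simp add: d_def)
  finally have "real (card (linf_sphere z m)) = (2 * real m + 1) ^ d - (2 * real m - 1) ^ d"
    using m by (simp add: of_nat_diff power_mono nat_mult_distrib)
  also have "\<dots> \<le> ((2 * real m + 1) - (2 * real m - 1)) * (d * (2 * real m + 1) ^ (d - 1))"
    using power_diff_le[of "2 * real m - 1" "2 * real m + 1" "d - 1"] m d by simp
  also have "\<dots> = 2 * d * (2 * real m + 1) ^ (d - 1)"
    by simp
  also have "\<dots> \<le> 2 * d * (3 * real m) ^ (d - 1)"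
    using m by (intro mult_left_mono power_mono) auto
  finally show ?thesis
    by (simp add: d_def power_mult_distrib)
qed

lemma Box_0_eq_linf_ball: "Box (0 :: int ^ 'd) \<rho> = {v. linf_norm v \<le> \<lfloor>\<rho>\<rfloor>}"
  by (auto simp: Box_def le_floor_iff)

lemma finite_Box_0: "finite (Box (0 :: int ^ 'd) \<rho>)"
  unfolding Box_0_eq_linf_ball by (rule finite_linf_ball)

lemma card_Box_0_le:
  assumes "\<rho> \<ge> 0"
  shows "real (card (Box (0 :: int ^ 'd) \<rho>)) \<le> (2 * \<rho> + 1) ^ CARD('d)"
proof -
  have "0 \<le> \<lfloor>\<rho>\<rfloor>"
    using assms by simp
  then have "real (card (Box (0 :: int ^ 'd) \<rho>)) = (2 * real_of_int \<lfloor>\<rho>\<rfloor> + 1) ^ CARD('d)"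
    unfolding Box_0_eq_linf_ball by (simp add: card_linf_ball)
  also have "\<dots> \<le> (2 * \<rho> + 1) ^ CARD('d)"
    using \<open>0 \<le> \<lfloor>\<rho>\<rfloor>\<close> by (intro power_mono) auto
  finally show ?thesis .
qed

lemma Compl_Box_eq_UN_linf_sphere:
  "- Box z R = (\<Union>m. if R < real m then linf_sphere z m else {})"
proof (intro set_eqI iffI)
  fix w
  assume "w \<in> - Box z R"
  then have "R < real (nat (linf_norm (w - z)))"
    using linf_norm_nonneg[of "w - z"] by (simp add: Box_def)
  then show "w \<in> (\<Union>m. if R < real m then linf_sphere z m else {})"
    using linf_norm_nonneg[of "w - z"]
    by (auto simp: linf_sphere_def intro!: exI[of _ "nat (linf_norm (w - z))"])
qed (auto simp: Box_def linf_sphere_def split: if_splits)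

lemma linf_norm_ge_one:
  assumes "(v :: int ^ 'd) \<noteq> 0"
  shows "1 \<le> linf_norm v"
proof -
  obtain i where "v $ i \<noteq> 0"
    using assms by (auto simp: vec_eq_iff)
  then have "1 \<le> \<bar>v $ i\<bar>"
    by linarith
  then show ?thesis
    using abs_le_linf_norm[of v i] by linarith
qed

lemma doubleton_in_LR_edges: "z \<noteq> w \<Longrightarrow> {z, w} \<in> LR_edges"
  unfolding LR_edges_def by blast

lemma (in prob_space) prob_exponential_less_le:
  assumes "distributed M lborel X (\<lambda>t. ennreal (exponential_density 1 t))" and "0 \<le> c"
  shows "prob {x \<in> space M. X x < c} \<le> c"
proof -
  have "X \<in> borel_measurable M"
    using distributed_measurable[OF assms(1)] by simp
  then have "prob {x \<in> space M. X x < c} \<le> prob {x \<in> space M. X x \<le> c}"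
    by (intro finite_measure_mono) auto
  also have "\<dots> = 1 - exp (- c)"
    using exponential_distributedD_le[OF assms] by simp
  also have "\<dots> \<le> c"
    using exp_ge_add_one_self[of "- c"] by simp
  finally show ?thesis .
qed

locale exponential_edge_weights = prob_space M
  for M :: "'w measure" and \<omega> :: "(int ^ 'd) set \<Rightarrow> 'w \<Rightarrow> real" +
  assumes exponential_weight:
    "e \<in> LR_edges \<Longrightarrow> distributed M lborel (\<omega> e) (\<lambda>t. ennreal (exponential_density 1 t))"
begin

definition light_edge :: "real \<Rightarrow> real \<Rightarrow> int ^ 'd \<Rightarrow> int ^ 'd \<Rightarrow> 'w set" where
  "light_edge \<alpha> t z w = {x \<in> space M. LR_W \<alpha> \<omega> z w x < t}"

lemma light_edge_eq:
  assumes "z \<noteq> w"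
  shows "light_edge \<alpha> t z w =
    {x \<in> space M. \<omega> {z, w} x < t * real_of_int (l1_norm (z - w)) powr (- \<alpha>)}"
proof -
  have "1 \<le> l1_norm (z - w)"
    using assms linf_norm_ge_one[of "z - w"] linf_norm_le_l1_norm[of "z - w"] by simp
  then have "0 < real_of_int (l1_norm (z - w)) powr (- \<alpha>)"
    by simp
  then show ?thesis
    by (auto simp: light_edge_def LR_W_def r_pow_def pos_divide_less_eq)
qed

lemma light_edge_measurable: "z \<noteq> w \<Longrightarrow> light_edge \<alpha> t z w \<in> events"
  using distributed_measurable[OF exponential_weight[OF doubleton_in_LR_edges]]
  by (simp add: light_edge_eq)

lemma prob_light_edge_le:
  assumes "z \<noteq> w" and "0 \<le> t"
  shows "prob (light_edge \<alpha> t z w) \<le> t * real_of_int (l1_norm (z - w)) powr (- \<alpha>)"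
  unfolding light_edge_eq[OF assms(1)] using assms
  by (intro prob_exponential_less_le exponential_weight doubleton_in_LR_edges) auto

lemma light_edges_sphere_measurable:
  "1 \<le> m \<Longrightarrow> (\<Union>w \<in> linf_sphere z m. light_edge \<alpha> t z w) \<in> events"
  using center_notin_linf_sphere[of m z]
  by (intro sets.finite_UN finite_linf_sphere light_edge_measurable) auto

lemma prob_light_edge_sphere_le:
  assumes m: "1 \<le> m" and t: "0 \<le> t" and \<alpha>: "0 \<le> \<alpha>"
  shows "prob (\<Union>w \<in> linf_sphere z m. light_edge \<alpha> t z w)
    \<le> t * (2 * real CARD('d) * 3 ^ (CARD('d) - 1)) * real m powr (real CARD('d) - 1 - \<alpha>)"
proof -
  have neq: "z \<noteq> w" if "w \<in> linf_sphere z m" for w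
    using that center_notin_linf_sphere[OF m] by auto
  have edge_le: "prob (light_edge \<alpha> t z w) \<le> t * real m powr (- \<alpha>)" if "w \<in> linf_sphere z m" for w
  proof -
    have "real m \<le> real_of_int (l1_norm (z - w))"
      using that linf_norm_le_l1_norm[of "z - w"] linf_norm_commute[of w z]
      by (simp add: linf_sphere_def)
    then have "real_of_int (l1_norm (z - w)) powr (- \<alpha>) \<le> real m powr (- \<alpha>)"
      using m \<alpha> by (intro powr_mono2') auto
    then show ?thesis
      using prob_light_edge_le[OF neq[OF that] t, of \<alpha>] t by (meson mult_left_mono order_trans)
  qed
  have "prob (\<Union>w \<in> linf_sphere z m. light_edge \<alpha> t z w)
      \<le> (\<Sum>w \<in> linf_sphere z m. prob (light_edge \<alpha> t z w))"
    using finite_linf_sphere neq by (intro measure_UNION_le light_edge_measurable) auto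
  also have "\<dots> \<le> real (card (linf_sphere z m)) * (t * real m powr (- \<alpha>))"
    using sum_mono[OF edge_le] by simp
  also have "\<dots> \<le> (2 * real CARD('d) * 3 ^ (CARD('d) - 1) * real m ^ (CARD('d) - 1)) * (t * real m powr (- \<alpha>))"
    using card_linf_sphere_le[OF m] t by (intro mult_right_mono) auto
  also have "\<dots> = t * (2 * real CARD('d) * 3 ^ (CARD('d) - 1)) * real m powr (real CARD('d) - 1 - \<alpha>)"
  proof -
    have "real m ^ (CARD('d) - 1) = real m powr (real CARD('d) - 1)"
      using m by (simp add: powr_realpow[symmetric] of_nat_diff)
    moreover have "real m powr (real CARD('d) - 1) * real m powr (- \<alpha>) = real m powr (real CARD('d) - 1 - \<alpha>)"
      by (simp add: powr_add[symmetric])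
    ultimately show ?thesis
      by (simp add: mult_ac)
  qed
  finally show ?thesis .
qed

lemma light_edges_outside_Box:
  assumes t: "0 \<le> t" and R: "1 \<le> R" and \<alpha>: "real CARD('d) < \<alpha>"
  defines "s \<equiv> \<alpha> - real CARD('d)"
  shows "(\<Union>w \<in> - Box z R. light_edge \<alpha> t z w) \<in> events"
    and "prob (\<Union>w \<in> - Box z R. light_edge \<alpha> t z w)
      \<le> t * (2 * real CARD('d) * 3 ^ (CARD('d) - 1) * 2 powr s / s) * R powr (- s)"
proof -
  define D where "D = 2 * real CARD('d) * 3 ^ (CARD('d) - 1)"
  define F where "F = (\<lambda>m. if R < real m then \<Union>w \<in> linf_sphere z m. light_edge \<alpha> t z w else {})"
  define tail where "tail = (\<lambda>m::nat. if R < real m then real m powr (- (s + 1)) else 0)"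
  have s: "0 < s"
    using \<alpha> by (simp add: s_def)
  have D: "0 \<le> D"
    by (simp add: D_def)
  have far_eq: "(\<Union>w \<in> - Box z R. light_edge \<alpha> t z w) = (\<Union>m. F m)"
    unfolding Compl_Box_eq_UN_linf_sphere F_def by (auto split: if_splits)
  have F_events: "F m \<in> events" for m
    unfolding F_def using R by (auto intro: light_edges_sphere_measurable)
  have F_le: "prob (F m) \<le> t * D * tail m" for m
  proof (cases "R < real m")
    case True
    then have "1 \<le> m"
      using R by linarith
    moreover have exponent: "real CARD('d) - 1 - \<alpha> = - (s + 1)"
      by (simp add: s_def)
    ultimately show ?thesis
      using True prob_light_edge_sphere_le[of m t \<alpha> z, unfolded exponent] t \<alpha>
      by (simp add: F_def tail_def D_def)
  qed (simp add: F_def tail_def)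
  have tail_summable: "summable tail" and tail_le: "suminf tail \<le> 2 powr s * R powr (- s) / s"
    unfolding tail_def using powr_tail_summable_le_real[OF s R] by auto
  have "summable (\<lambda>m. prob (F m))"
    using F_le by (intro summable_comparison_test[OF _ summable_mult[OF tail_summable, of "t * D"]]) auto
  then have "prob (\<Union>m. F m) \<le> (\<Sum>m. prob (F m))"
    using F_events by (intro finite_measure_subadditive_countably) auto
  also have "\<dots> \<le> (\<Sum>m. t * D * tail m)"
    using F_le \<open>summable (\<lambda>m. prob (F m))\<close> summable_mult[OF tail_summable] by (rule suminf_le)
  also have "\<dots> = t * D * suminf tail"
    by (rule suminf_mult[OF tail_summable])
  also have "\<dots> \<le> t * D * (2 powr s * R powr (- s) / s)"
    using tail_le t D by (intro mult_left_mono) auto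
  finally show "prob (\<Union>w \<in> - Box z R. light_edge \<alpha> t z w) \<le> t * (D * 2 powr s / s) * R powr (- s)"
    unfolding far_eq by (simp add: mult_ac)
  show "(\<Union>w \<in> - Box z R. light_edge \<alpha> t z w) \<in> events"
    unfolding far_eq using F_events by auto
qed

lemma prob_light_edges_from_Box_le:
  assumes \<rho>: "0 \<le> \<rho>" and t: "0 \<le> t" and R: "1 \<le> R" and \<alpha>: "real CARD('d) < \<alpha>"
  defines "s \<equiv> \<alpha> - real CARD('d)"
  shows "(\<Union>z \<in> Box 0 \<rho>. \<Union>w \<in> - Box z R. light_edge \<alpha> t z w) \<in> events"
    and "prob (\<Union>z \<in> Box 0 \<rho>. \<Union>w \<in> - Box z R. light_edge \<alpha> t z w)
      \<le> (2 * \<rho> + 1) ^ CARD('d) * (t * (2 * real CARD('d) * 3 ^ (CARD('d) - 1) * 2 powr s / s) * R powr (- s))"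
proof -
  define K where "K = 2 * real CARD('d) * 3 ^ (CARD('d) - 1) * 2 powr s / s"
  have K: "0 \<le> K"
    using \<alpha> by (simp add: K_def s_def)
  have outside_events: "(\<Union>w \<in> - Box z R. light_edge \<alpha> t z w) \<in> events" for z
    using light_edges_outside_Box(1)[OF t R \<alpha>] .
  have outside_le: "prob (\<Union>w \<in> - Box z R. light_edge \<alpha> t z w) \<le> t * K * R powr (- s)" for z
    using light_edges_outside_Box(2)[OF t R \<alpha>, of z] unfolding K_def s_def .
  show "(\<Union>z \<in> Box 0 \<rho>. \<Union>w \<in> - Box z R. light_edge \<alpha> t z w) \<in> events"
    using outside_events finite_Box_0 by auto
  have "prob (\<Union>z \<in> Box 0 \<rho>. \<Union>w \<in> - Box z R. light_edge \<alpha> t z w)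
      \<le> (\<Sum>z \<in> Box 0 \<rho>. prob (\<Union>w \<in> - Box z R. light_edge \<alpha> t z w))"
    using outside_events finite_Box_0 by (intro measure_UNION_le) auto
  also have "\<dots> \<le> real (card (Box (0 :: int ^ 'd) \<rho>)) * (t * K * R powr (- s))"
    using sum_mono[OF outside_le] by simp
  also have "\<dots> \<le> (2 * \<rho> + 1) ^ CARD('d) * (t * K * R powr (- s))"
    using card_Box_0_le[OF \<rho>] t K by (intro mult_right_mono) auto
  finally show "prob (\<Union>z \<in> Box 0 \<rho>. \<Union>w \<in> - Box z R. light_edge \<alpha> t z w)
      \<le> (2 * \<rho> + 1) ^ CARD('d) * (t * K * R powr (- s))" .
qed

end

lemma box_volume_times_tail_le:
  fixes a b c \<theta> s :: real and k n :: nat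
  assumes n: "1 \<le> n" and a: "0 \<le> a" and bc: "0 \<le> c * b"
  shows "(2 * (a * real n) + 1) ^ k * (c * real n * b * (real n powr \<theta>) powr (- s))
    \<le> (2 * a + 1) ^ k * (c * b) * real n powr (real k + 1 - \<theta> * s)"
proof -
  have powers: "real n powr (real k + 1 - \<theta> * s) = real n ^ k * real n * real n powr (- (\<theta> * s))"
  proof -
    have "real k + 1 - \<theta> * s = real k + 1 + - (\<theta> * s)"
      by simp
    then show ?thesis
      using n by (simp only: powr_add) (simp add: powr_realpow)
  qed
  have "(2 * (a * real n) + 1) ^ k * (c * real n * b * (real n powr \<theta>) powr (- s))
      = (2 * (a * real n) + 1) ^ k * ((c * b) * (real n * (real n powr \<theta>) powr (- s)))"
    by (simp add: mult_ac)
  also have "\<dots> \<le> ((2 * a + 1) * real n) ^ k * ((c * b) * (real n * (real n powr \<theta>) powr (- s)))"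
  proof (rule mult_right_mono)
    show "(2 * (a * real n) + 1) ^ k \<le> ((2 * a + 1) * real n) ^ k"
      using n a by (intro power_mono) (auto simp: algebra_simps)
    show "0 \<le> (c * b) * (real n * (real n powr \<theta>) powr (- s))"
      by (rule mult_nonneg_nonneg[OF bc]) simp
  qed
  also have "\<dots> = (2 * a + 1) ^ k * (c * b) * (real n ^ k * real n * real n powr (- (\<theta> * s)))"
    by (simp add: powr_powr power_mult_distrib mult_ac)
  finally show ?thesis
    unfolding powers .
qed

theorem lemma8p1:
  fixes M :: "'w measure"
    and \<omega> :: "(int ^ 'd) set \<Rightarrow> 'w \<Rightarrow> real"
    and \<alpha> \<theta> c\<^sub>1 c\<^sub>2 :: real
  assumes "prob_space M"
    and "prob_space.indep_vars M (\<lambda>_. borel) \<omega> LR_edges"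
    and "\<And>e. e \<in> LR_edges \<Longrightarrow>
           distributed M lborel (\<omega> e) (\<lambda>t. ennreal (exponential_density 1 t))"
    and "\<alpha> > 2 * real CARD('d) + 1"
    and "0 < \<theta>" and "\<theta> < 1"
    and "0 < c\<^sub>1" and "0 < c\<^sub>2"
  shows "\<exists>C>0. \<forall>n::nat. 1 \<le> n \<longrightarrow>
           measure M {x \<in> space M. \<forall>z \<in> Box 0 (c\<^sub>2 * real n).
               \<forall>w. w \<notin> Box z (real n powr \<theta>) \<longrightarrow> c\<^sub>1 * real n \<le> LR_W \<alpha> \<omega> z w x}
           \<ge> 1 - C * real n powr (real CARD('d) + 1 - \<theta> * (\<alpha> - real CARD('d)))"
proof -
  interpret exponential_edge_weights M \<omega>
    using assms(1,3) by (simp add: exponential_edge_weights_def exponential_edge_weights_axioms_def)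
  define s where "s = \<alpha> - real CARD('d)"
  define K where "K = 2 * real CARD('d) * 3 ^ (CARD('d) - 1) * 2 powr s / s"
  have \<alpha>: "real CARD('d) < \<alpha>" and K: "0 < K"
    using assms(4) by (simp_all add: K_def s_def)
  show ?thesis
  proof (intro exI[of _ "(2 * c\<^sub>2 + 1) ^ CARD('d) * (c\<^sub>1 * K)"] conjI allI impI)
    show "0 < (2 * c\<^sub>2 + 1) ^ CARD('d) * (c\<^sub>1 * K)"
      using assms(7,8) K by simp
    fix n :: nat
    assume n: "1 \<le> n"
    define bad where "bad = (\<Union>z \<in> Box 0 (c\<^sub>2 * real n). \<Union>w \<in> - Box z (real n powr \<theta>).
      light_edge \<alpha> (c\<^sub>1 * real n) z w)"
    have R: "1 \<le> real n powr \<theta>"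
      using n assms(5) by (simp add: ge_one_powr_ge_zero)
    have bad: "bad \<in> events"
      "prob bad \<le> (2 * (c\<^sub>2 * real n) + 1) ^ CARD('d) * (c\<^sub>1 * real n * K * (real n powr \<theta>) powr (- s))"
      using prob_light_edges_from_Box_le[of "c\<^sub>2 * real n" "c\<^sub>1 * real n", OF _ _ R \<alpha>] assms(7,8)
      unfolding bad_def K_def s_def by auto
    note bad(2)
    also have "(2 * (c\<^sub>2 * real n) + 1) ^ CARD('d) * (c\<^sub>1 * real n * K * (real n powr \<theta>) powr (- s))
        \<le> (2 * c\<^sub>2 + 1) ^ CARD('d) * (c\<^sub>1 * K) * real n powr (real CARD('d) + 1 - \<theta> * s)"
      using n assms(7,8) K by (intro box_volume_times_tail_le) auto
    moreover have "{x \<in> space M. \<forall>z \<in> Box 0 (c\<^sub>2 * real n). \<forall>w. w \<notin> Box z (real n powr \<theta>) \<longrightarrow>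
        c\<^sub>1 * real n \<le> LR_W \<alpha> \<omega> z w x} = space M - bad"
      by (auto simp: bad_def light_edge_def not_less) (metis not_less)
    ultimately show "1 - (2 * c\<^sub>2 + 1) ^ CARD('d) * (c\<^sub>1 * K) * real n powr (real CARD('d) + 1 - \<theta> * (\<alpha> - real CARD('d)))
        \<le> prob {x \<in> space M. \<forall>z \<in> Box 0 (c\<^sub>2 * real n).
             \<forall>w. w \<notin> Box z (real n powr \<theta>) \<longrightarrow> c\<^sub>1 * real n \<le> LR_W \<alpha> \<omega> z w x}"
      using prob_compl[OF bad(1)] by (simp add: s_def)
  qed
qed

end
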